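(* Let $n\ge2$, and let $U_0,U_1,\dots,U_T$ be any unitaries on $H$ (a quantum query algorithm with $T$ queries to the comparison oracle). For each permutation $\sigma$ of $\{0,\dots,n-1\}$ and $0\le t\le T$ let $|\psi_\sigma^t\rangle=U_tO_\sigma U_{t-1}O_\sigma\cdots U_1O_\sigma U_0|\vec0\rangle$ (with $t$ oracle applications), and define $$s_t=\sum_{\sigma,\tau} w(\sigma,\tau)\,\bigl|\langle\psi^t_\sigma|\psi^t_\tau\rangle\bigr|,$$ the sum over all ordered pairs of permutations. Then $|s_{t+1}-s_t|\le 2\pi\, n!$ for all $0\le t\le T-1$.
   Context: For a permutation $\sigma$ of $\{0,\dots,n-1\}$, the comparison matrix $M_\sigma\in\{0,1\}^{n\times n}$ has $(M_\sigma)_{i,j}=1$ if $\sigma(i)\le\sigma(j)$ and $0$ otherwise. $H$ is the Hilbert space spanned by orthonormal vectors $|i,j,b,c\rangle$, $0\le i,j\le n-1$, $b\in\{0,1\}$, $c\in\{0,1\}^w$ for some fixed $w\ge0$, and $O_\sigma$ is the unitary $O_\sigma|i,j,b,c\rangle=|i,j,b\oplus(M_\sigma)_{i,j},c\rangle$. For integers $0\le k\le n-2$ and $1\le d\le n-k-1$, define $\sigma^{(k,d)}=(k+d,k+d-1,\dots,k)\circ\sigma$, where $(k+d,k+d-1,\dots,k)$ is the cyclic permutation sending $k+d\mapsto k+d-1\mapsto\cdots\mapsto k\mapsto k+d$. The weight is $w(\sigma,\tau)=1/d$ if $\tau=\sigma^{(k,d)}$ for some such $k,d$, and $w(\sigma,\tau)=0$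 otherwise. *)

theory Defs
  imports Complex_Main "HOL-Combinatorics.Permutations"
begin

text \<open>Basis labels |i,j,b,c> of the Hilbert space H: i,j < n, b a bit, c a bit string of length w.\<close>
type_synonym basis = "nat \<times> nat \<times> bool \<times> bool list"
type_synonym vec = "basis \<Rightarrow> complex"
type_synonym op = "basis \<Rightarrow> basis \<Rightarrow> complex"

definition basisH :: "nat \<Rightarrow> nat \<Rightarrow> basis set" where
  "basisH n w = {..<n} \<times> {..<n} \<times> (UNIV :: bool set) \<times> {c. length c = w}"

definition inner :: "nat \<Rightarrow> nat \<Rightarrow> vec \<Rightarrow> vec \<Rightarrow> complex" where
  "inner n w u v = (\<Sum>x\<in>basisH n w. cnj (u x) * v x)"

definition apply_op :: "nat \<Rightarrow> nat \<Rightarrow> op \<Rightarrow> vec \<Rightarrow> vec" where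
  "apply_op n w U v = (\<lambda>x. \<Sum>y\<in>basisH n w. U x y * v y)"

definition unitary_op :: "nat \<Rightarrow> nat \<Rightarrow> op \<Rightarrow> bool" where
  "unitary_op n w U \<longleftrightarrow> (\<forall>x\<in>basisH n w. \<forall>y\<in>basisH n w.
      (\<Sum>z\<in>basisH n w. cnj (U z x) * U z y) = (if x = y then 1 else 0))"

definition cmp_mat :: "(nat \<Rightarrow> nat) \<Rightarrow> nat \<Rightarrow> nat \<Rightarrow> bool" where
  "cmp_mat \<sigma> i j \<longleftrightarrow> \<sigma> i \<le> \<sigma> j"

text \<open>O_sigma |i,j,b,c> = |i,j,b xor M_ij,c>, as an action on coefficient vectors.\<close>
definition query_op :: "(nat \<Rightarrow> nat) \<Rightarrow> vec \<Rightarrow> vec" where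
  "query_op \<sigma> v = (\<lambda>(i, j, b, c). v (i, j, b \<noteq> cmp_mat \<sigma> i j, c))"

definition zero_state :: "nat \<Rightarrow> vec" where
  "zero_state w = (\<lambda>x. if x = (0, 0, False, replicate w False) then 1 else 0)"

fun psi :: "nat \<Rightarrow> nat \<Rightarrow> (nat \<Rightarrow> op) \<Rightarrow> (nat \<Rightarrow> nat) \<Rightarrow> nat \<Rightarrow> vec" where
  "psi n w U \<sigma> 0 = apply_op n w (U 0) (zero_state w)"
| "psi n w U \<sigma> (Suc t) = apply_op n w (U (Suc t)) (query_op \<sigma> (psi n w U \<sigma> t))"

definition cyc :: "nat \<Rightarrow> nat \<Rightarrow> nat \<Rightarrow> nat" where
  "cyc k d x = (if x = k then k + d else if k < x \<and> x \<le> k + d then x - 1 else x)"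

definition is_shift :: "nat \<Rightarrow> (nat \<Rightarrow> nat) \<Rightarrow> (nat \<Rightarrow> nat) \<Rightarrow> nat \<Rightarrow> nat \<Rightarrow> bool" where
  "is_shift n \<sigma> \<tau> k d \<longleftrightarrow> k \<le> n - 2 \<and> 1 \<le> d \<and> d \<le> n - k - 1 \<and> \<tau> = cyc k d \<circ> \<sigma>"

definition weight :: "nat \<Rightarrow> (nat \<Rightarrow> nat) \<Rightarrow> (nat \<Rightarrow> nat) \<Rightarrow> real" where
  "weight n \<sigma> \<tau> = (if \<exists>k d. is_shift n \<sigma> \<tau> k d
      then 1 / real (THE d. \<exists>k. is_shift n \<sigma> \<tau> k d) else 0)"

definition s_val :: "nat \<Rightarrow> nat \<Rightarrow> (nat \<Rightarrow> op) \<Rightarrow> nat \<Rightarrow> real" where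
  "s_val n w U t = (\<Sum>\<sigma>\<in>{\<sigma>. \<sigma> permutes {..<n}}. \<Sum>\<tau>\<in>{\<tau>. \<tau> permutes {..<n}}.
      weight n \<sigma> \<tau> * cmod (inner n w (psi n w U \<sigma> t) (psi n w U \<tau> t)))"

end

theory Submission
  imports Defs
begin

(* A query changes the overlap <psi_sigma|psi_tau> only through the basis states |i,j,b,c> on
   which M_sigma and M_tau differ.  For tau = sigma^(k,d) these are the positions of ranks k and
   k + e with 1 <= e <= d, and a weighted AM-GM inequality with the weights
   lambda_{e,d} = sqrt ((e - 1/2) / (d - e + 1/2)) bounds the change by lambda_{e,d} times the
   mass that psi_sigma puts on the queries between ranks k and k + e, plus 1/lambda_{e,d} times
   the mass that psi_tau puts on the queries between ranks k + e - 1 and k + d.  After the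
   weighting by 1/d, every pair of ranks collects a total coefficient of the form
   sum_j f_c (j + 1/2) with the convex function f_c y = sqrt c / ((c + y) sqrt y); this midpoint
   sum is at most the integral of f_c over [0, oo), which is pi.  As the masses of each state
   sum to 1, each of the two halves contributes at most pi per permutation. *)

section \<open>An arctan bound for midpoint sums\<close>

lemma inverse_sqrt_midpoint_convex:
  fixes x h :: real
  assumes "0 < h" "h < x"
  shows "2 / sqrt x \<le> 1 / sqrt (x + h) + 1 / sqrt (x - h)"
proof -
  define p q s where "p = sqrt (x + h)" and "q = sqrt (x - h)" and "s = sqrt x"
  have pos: "0 < p" "0 < q" "0 < s" using assms by (auto simp: p_def q_def s_def)
  have sq: "2 * (p\<^sup>2 + q\<^sup>2) = (2 * s)\<^sup>2" using assms by (simp add: p_def q_def s_def)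
  have parallelogram: "(p + q)\<^sup>2 + (p - q)\<^sup>2 = 2 * (p\<^sup>2 + q\<^sup>2)"
    by (simp add: power2_eq_square algebra_simps)
  have "(p + q)\<^sup>2 \<le> (2 * s)\<^sup>2"
    using parallelogram sq zero_le_power2[of "p - q"] by linarith
  then have sum_le: "p + q \<le> 2 * s" by (rule power2_le_imp_le) (use pos in simp)
  have "4 * (p * q) \<le> (p + q) * (p + q)"
    using zero_le_power2[of "p - q"] by (simp add: power2_eq_square algebra_simps)
  also have "\<dots> \<le> (2 * s) * (p + q)" using sum_le pos by (intro mult_right_mono) simp_all
  finally have "2 * (p * q) \<le> s * (p + q)" by simp
  then have "2 / s \<le> 1 / p + 1 / q" using pos by (simp add: field_simps)
  then show ?thesis by (simp add: p_def q_def s_def)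
qed

lemma inverse_midpoint_convex:
  fixes z h :: real
  assumes "0 < h" "h < z"
  shows "2 / z \<le> 1 / (z + h) + 1 / (z - h)"
proof -
  have "2 / z = 2 * z / (z * z)" using assms by simp
  also have "\<dots> \<le> 2 * z / ((z + h) * (z - h))"
    using assms by (intro divide_left_mono) (auto simp: algebra_simps intro: mult_strict_mono)
  also have "\<dots> = 1 / (z + h) + 1 / (z - h)"
    using assms by (simp add: field_simps)
  finally show ?thesis .
qed

lemma midpoint_convex_mult:
  fixes a a1 a2 b b1 b2 :: real
  assumes "0 \<le> a" "0 \<le> b" "2 * a \<le> a1 + a2" "2 * b \<le> b1 + b2"
    and "0 \<le> (a1 - a2) * (b1 - b2)"
  shows "2 * (a * b) \<le> a1 * b1 + a2 * b2"
proof -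
  have "(2 * a) * (2 * b) \<le> (a1 + a2) * (b1 + b2)"
    using assms by (intro mult_mono) simp_all
  moreover have "(a1 + a2) * (b1 + b2) \<le> 2 * (a1 * b1 + a2 * b2)"
    using assms(5) by (simp add: algebra_simps)
  ultimately show ?thesis by simp
qed

definition arctan_density :: "real \<Rightarrow> real \<Rightarrow> real" where
  "arctan_density c y = sqrt c / ((c + y) * sqrt y)"

definition arctan_primitive :: "real \<Rightarrow> real \<Rightarrow> real" where
  "arctan_primitive c y = 2 * arctan (sqrt (y / c))"

lemma arctan_density_midpoint_convex:
  fixes c x h :: real
  assumes "0 < c" "0 < h" "h < x"
  shows "2 * arctan_density c x \<le> arctan_density c (x + h) + arctan_density c (x - h)"
proof -
  have "2 * (1 / (c + x)) \<le> 1 / (c + x + h) + 1 / (c + x - h)"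
    using inverse_midpoint_convex[of h "c + x"] assms by simp
  then have "2 * (1 / (c + x)) \<le> 1 / (c + (x + h)) + 1 / (c + (x - h))"
    by (simp only: add.assoc add_diff_eq)
  moreover have "2 * (1 / sqrt x) \<le> 1 / sqrt (x + h) + 1 / sqrt (x - h)"
    using inverse_sqrt_midpoint_convex[OF assms(2,3)] by simp
  moreover have
    "0 \<le> (1 / (c + (x + h)) - 1 / (c + (x - h))) * (1 / sqrt (x + h) - 1 / sqrt (x - h))"
    using assms by (intro mult_nonpos_nonpos) (simp_all add: frac_le)
  ultimately have "2 * (1 / (c + x) * (1 / sqrt x))
      \<le> 1 / (c + (x + h)) * (1 / sqrt (x + h)) + 1 / (c + (x - h)) * (1 / sqrt (x - h))"
    using assms by (intro midpoint_convex_mult) simp_all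
  then have "sqrt c * (2 * (1 / (c + x) * (1 / sqrt x)))
      \<le> sqrt c * (1 / (c + (x + h)) * (1 / sqrt (x + h)) + 1 / (c + (x - h)) * (1 / sqrt (x - h)))"
    by (rule mult_left_mono) (use assms in simp)
  then show ?thesis by (simp add: arctan_density_def algebra_simps)
qed

lemma has_real_derivative_arctan_primitive:
  fixes c y :: real
  assumes "0 < c" "0 < y"
  shows "(arctan_primitive c has_real_derivative arctan_density c y) (at y)"
proof -
  have "(arctan_primitive c has_real_derivative
        2 * (inverse (1 + (sqrt (y / c))\<^sup>2) * (inverse (sqrt (y / c)) / 2 * (1 / c)))) (at y)"
    unfolding arctan_primitive_def using assms
    by (auto intro!: derivative_eq_intros simp: field_simps)
  moreover have "2 * (inverse (1 + (sqrt (y / c))\<^sup>2) * (inverse (sqrt (y / c)) / 2 * (1 / c)))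
      = arctan_density c y"
  proof -
    have "inverse (1 + (sqrt (y / c))\<^sup>2) = c / (c + y)" using assms by (simp add: field_simps)
    moreover have "inverse (sqrt (y / c)) = sqrt c / sqrt y" by (simp add: real_sqrt_divide)
    ultimately show ?thesis using assms by (simp add: arctan_density_def)
  qed
  ultimately show ?thesis by simp
qed

lemma midpoint_le_increment:
  fixes F f :: "real \<Rightarrow> real" and a b :: real
  assumes "a < b" and cont: "continuous_on {a..b} F"
    and deriv: "\<And>y. a < y \<Longrightarrow> y < b \<Longrightarrow> (F has_real_derivative f y) (at y)"
    and convex: "\<And>h. 0 < h \<Longrightarrow> h < (b - a) / 2 \<Longrightarrow>
        2 * f ((a + b) / 2) \<le> f ((a + b) / 2 + h) + f ((a + b) / 2 - h)"
  shows "(b - a) * f ((a + b) / 2) \<le> F b - F a"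
proof -
  define m r where "m = (a + b) / 2" and "r = (b - a) / 2"
  define g where "g h = F (m + h) - F (m - h) - 2 * h * f m" for h
  have "g 0 \<le> g r"
  proof (rule DERIV_nonneg_imp_increasing_open[of 0 r g])
    fix h assume h: "0 < h" "h < r"
    have "((\<lambda>h. F (m + h)) has_real_derivative f (m + h) * 1) (at h)"
      by (rule DERIV_chain2[OF deriv])
         (use h in \<open>auto intro!: derivative_eq_intros simp: m_def r_def field_simps\<close>)
    moreover have "((\<lambda>h. F (m - h)) has_real_derivative f (m - h) * (- 1)) (at h)"
      by (rule DERIV_chain2[OF deriv])
         (use h in \<open>auto intro!: derivative_eq_intros simp: m_def r_def field_simps\<close>)
    moreover have "((\<lambda>h. 2 * h * f m) has_real_derivative 2 * 1 * f m) (at h)"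
      by (auto intro!: derivative_eq_intros)
    ultimately have "(g has_real_derivative f (m + h) * 1 - f (m - h) * (- 1) - 2 * 1 * f m) (at h)"
      unfolding g_def by (intro derivative_intros)
    moreover have "0 \<le> f (m + h) * 1 - f (m - h) * (- 1) - 2 * 1 * f m"
      using convex[of h] h by (simp add: m_def r_def)
    ultimately show "\<exists>y. (g has_real_derivative y) (at h) \<and> 0 \<le> y" by blast
  next
    have "continuous_on {0..r} (\<lambda>h. F (m + h))"
      by (intro continuous_on_compose2[OF cont] continuous_intros) (auto simp: m_def r_def field_simps)
    moreover have "continuous_on {0..r} (\<lambda>h. F (m - h))"
      by (intro continuous_on_compose2[OF cont] continuous_intros) (auto simp: m_def r_def field_simps)
    ultimately show "continuous_on {0..r} g" unfolding g_def by (intro continuous_intros)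
  qed (use assms in \<open>simp add: r_def\<close>)
  moreover have "m + r = b" "m - r = a" by (simp_all add: m_def r_def field_simps)
  ultimately have "2 * r * f m \<le> F b - F a" by (simp add: g_def)
  moreover have "b - a = 2 * r" "(a + b) / 2 = m" by (simp_all add: m_def r_def)
  ultimately show ?thesis by simp
qed

lemma sum_arctan_density_midpoints_le_pi:
  fixes c :: real
  assumes "0 < c"
  shows "(\<Sum>j<N. arctan_density c (real j + 1 / 2)) \<le> pi"
proof -
  have cont: "continuous_on {0..} (arctan_primitive c)"
    unfolding arctan_primitive_def by (intro continuous_intros) (use assms in auto)
  have "arctan_density c (real j + 1 / 2)
      \<le> arctan_primitive c (real (Suc j)) - arctan_primitive c (real j)" for j
    using midpoint_le_increment[of "real j" "real (Suc j)" "arctan_primitive c" "arctan_density c"]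
      continuous_on_subset[OF cont] has_real_derivative_arctan_primitive
      arctan_density_midpoint_convex assms by (force simp: add_divide_distrib)
  then have "(\<Sum>j<N. arctan_density c (real j + 1 / 2))
      \<le> (\<Sum>j<N. arctan_primitive c (real (Suc j)) - arctan_primitive c (real j))"
    by (rule sum_mono)
  also have "\<dots> = arctan_primitive c (real N) - arctan_primitive c 0"
    using sum_lessThan_telescope[of "\<lambda>j. arctan_primitive c (real j)" N] by simp
  also have "\<dots> < pi"
    using arctan_ubound[of "sqrt (real N / c)"] by (simp add: arctan_primitive_def)
  finally show ?thesis by simp
qed

(* The weight lambda_{e,d}: writing d = (e - 1/2) + (d - e + 1/2), both lambda/d and
   1/(d lambda) become values of arctan_density (the two lemmas below). *)
definition shift_lambda :: "nat \<Rightarrow> nat \<Rightarrow> real" where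
  "shift_lambda e d = sqrt ((real e - 1 / 2) / (real d - real e + 1 / 2))"

lemma shift_lambda_pos: "1 \<le> e \<Longrightarrow> e \<le> d \<Longrightarrow> 0 < shift_lambda e d"
  unfolding shift_lambda_def by (auto intro!: divide_pos_pos)

lemma shift_lambda_div_eq:
  assumes "1 \<le> e" "e \<le> d"
  shows "shift_lambda e d / real d = arctan_density (real e - 1 / 2) (real d - real e + 1 / 2)"
proof -
  have "real d = (real e - 1 / 2) + (real d - real e + 1 / 2)" by simp
  then show ?thesis
    unfolding shift_lambda_def arctan_density_def by (simp add: real_sqrt_divide)
qed

lemma inverse_mult_shift_lambda_eq:
  assumes "1 \<le> e" "e \<le> d"
  shows "1 / (real d * shift_lambda e d)
    = arctan_density (real d - real e + 1 / 2) (real e - 1 / 2)"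
proof -
  have "real d = (real d - real e + 1 / 2) + (real e - 1 / 2)" by simp
  then show ?thesis using assms
    unfolding shift_lambda_def arctan_density_def by (simp add: real_sqrt_divide)
qed

lemma sum_shift_lambda_div_le_pi:
  assumes "1 \<le> e"
  shows "(\<Sum>d\<in>{e..<M}. shift_lambda e d / real d) \<le> pi"
proof -
  have "(\<Sum>d\<in>{e..<M}. shift_lambda e d / real d) = (\<Sum>j<M - e. shift_lambda e (e + j) / real (e + j))"
    by (rule sum.reindex_bij_witness[of _ "\<lambda>j. e + j" "\<lambda>d. d - e"]) auto
  also have "\<dots> = (\<Sum>j<M - e. arctan_density (real e - 1 / 2) (real j + 1 / 2))"
    using assms shift_lambda_div_eq[of e "e + _"] by (intro sum.cong refl) simp
  also have "\<dots> \<le> pi" using assms by (intro sum_arctan_density_midpoints_le_pi) simp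
  finally show ?thesis .
qed

lemma sum_inverse_mult_shift_lambda_le_pi:
  assumes "1 \<le> g"
  shows "(\<Sum>e\<in>{1..N}. 1 / (real (g + e - 1) * shift_lambda e (g + e - 1))) \<le> pi"
proof -
  have "(\<Sum>e\<in>{1..N}. 1 / (real (g + e - 1) * shift_lambda e (g + e - 1)))
      = (\<Sum>j<N. 1 / (real (g + j) * shift_lambda (Suc j) (g + j)))"
    by (rule sum.reindex_bij_witness[of _ Suc "\<lambda>e. e - 1"]) auto
  also have "\<dots> = (\<Sum>j<N. arctan_density (real g - 1 / 2) (real j + 1 / 2))"
    using assms inverse_mult_shift_lambda_eq[of "Suc _" "g + _"]
    by (intro sum.cong refl) (simp add: ac_simps)
  also have "\<dots> \<le> pi" using assms by (intro sum_arctan_density_midpoints_le_pi) simp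
  finally show ?thesis .
qed

section \<open>Query masses and the effect of one query\<close>

definition aux_labels :: "nat \<Rightarrow> (bool \<times> bool list) set" where
  "aux_labels w = UNIV \<times> {c. length c = w}"

lemma finite_aux_labels: "finite (aux_labels w)"
  unfolding aux_labels_def using finite_lists_length_eq[of "UNIV :: bool set" w] by simp

lemma basisH_eq: "basisH n w = {(i, j, z). (i, j) \<in> {..<n} \<times> {..<n} \<and> z \<in> aux_labels w}"
  unfolding basisH_def aux_labels_def by auto

lemma finite_basisH: "finite (basisH n w)"
  unfolding basisH_def aux_labels_def[symmetric] using finite_aux_labels by simp

lemma sum_pairs_labels:
  "(\<Sum>(i, j, z)\<in>{(i, j, z). (i, j) \<in> A \<and> z \<in> C}. F i j z) = (\<Sum>(i, j)\<in>A. \<Sum>z\<in>C. F i j z)"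
proof -
  have "(\<Sum>(i, j, z)\<in>{(i, j, z). (i, j) \<in> A \<and> z \<in> C}. F i j z) = (\<Sum>((i, j), z)\<in>A \<times> C. F i j z)"
    by (rule sum.reindex_bij_witness[of _ "\<lambda>((i, j), z). (i, j, z)" "\<lambda>(i, j, z). ((i, j), z)"]) auto
  also have "\<dots> = (\<Sum>(i, j)\<in>A. \<Sum>z\<in>C. F i j z)"
    by (simp add: sum.cartesian_product split_def)
  finally show ?thesis .
qed

definition query_mass :: "nat \<Rightarrow> vec \<Rightarrow> nat \<Rightarrow> nat \<Rightarrow> real" where
  "query_mass w v i j = (\<Sum>z\<in>aux_labels w. (cmod (v (i, j, z)))\<^sup>2)"

lemma query_mass_nonneg: "0 \<le> query_mass w v i j"
  unfolding query_mass_def by (intro sum_nonneg) simp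

lemma sum_query_mass:
  "(\<Sum>(i, j, z)\<in>{(i, j, z). (i, j) \<in> A \<and> z \<in> aux_labels w}. F i j * (cmod (v (i, j, z)))\<^sup>2)
     = (\<Sum>(i, j)\<in>A. F i j * query_mass w v i j)"
  unfolding sum_pairs_labels query_mass_def by (simp add: sum_distrib_left split_def)

lemma inner_apply_unitary:
  assumes U: "unitary_op n w U"
  shows "inner n w (apply_op n w U u) (apply_op n w U v) = inner n w u v"
proof -
  let ?B = "basisH n w"
  have "inner n w (apply_op n w U u) (apply_op n w U v)
     = (\<Sum>x\<in>?B. \<Sum>y\<in>?B. \<Sum>z\<in>?B. cnj (U x y * u y) * (U x z * v z))"
    unfolding inner_def apply_op_def cnj_sum sum_product by simp
  also have "\<dots> = (\<Sum>y\<in>?B. \<Sum>z\<in>?B. \<Sum>x\<in>?B. cnj (U x y * u y) * (U x z * v z))"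
    by (subst sum.swap) (intro sum.cong refl sum.swap)
  also have "\<dots> = (\<Sum>y\<in>?B. \<Sum>z\<in>?B. (cnj (u y) * v z) * (\<Sum>x\<in>?B. cnj (U x y) * U x z))"
    by (intro sum.cong refl) (simp add: sum_distrib_left mult_ac)
  also have "\<dots> = (\<Sum>y\<in>?B. \<Sum>z\<in>?B. (cnj (u y) * v z) * (if y = z then 1 else 0))"
    using U unfolding unitary_op_def by (intro sum.cong refl) simp
  also have "\<dots> = inner n w u v"
    unfolding inner_def by (intro sum.cong refl) (simp add: finite_basisH if_distrib cong: if_cong)
  finally show ?thesis .
qed

definition oracle_flip :: "(nat \<Rightarrow> nat) \<Rightarrow> basis \<Rightarrow> basis" where
  "oracle_flip \<sigma> = (\<lambda>(i, j, b, c). (i, j, b \<noteq> cmp_mat \<sigma> i j, c))"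

lemma query_op_eq: "query_op \<sigma> v = v \<circ> oracle_flip \<sigma>"
  unfolding query_op_def oracle_flip_def by (auto simp: fun_eq_iff)

lemma oracle_flip_oracle_flip [simp]: "oracle_flip \<sigma> (oracle_flip \<sigma> x) = x"
  unfolding oracle_flip_def by (cases x) auto

lemma oracle_flip_in_basisH: "x \<in> basisH n w \<Longrightarrow> oracle_flip \<sigma> x \<in> basisH n w"
  unfolding oracle_flip_def basisH_def by (cases x) auto

lemma inner_query_op:
  "inner n w (query_op \<sigma> u) (query_op \<tau> v)
     = (\<Sum>x\<in>basisH n w. cnj (u x) * v (oracle_flip \<tau> (oracle_flip \<sigma> x)))"
  unfolding inner_def query_op_eq o_def
  by (rule sum.reindex_bij_witness[of _ "oracle_flip \<sigma>" "oracle_flip \<sigma>"])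
     (auto simp: oracle_flip_in_basisH)

lemma inner_query_op_same: "inner n w (query_op \<sigma> u) (query_op \<sigma> v) = inner n w u v"
  by (simp only: inner_query_op oracle_flip_oracle_flip) (simp add: inner_def)

lemma inner_self_eq: "inner n w v v = of_real (\<Sum>x\<in>basisH n w. (cmod (v x))\<^sup>2)"
  unfolding inner_def of_real_sum
  by (intro sum.cong refl) (simp add: complex_norm_square[symmetric] mult.commute)

lemma inner_psi_self:
  assumes "0 < n" and U: "\<And>i. i \<le> T \<Longrightarrow> unitary_op n w (U i)" and "t \<le> T"
  shows "inner n w (psi n w U \<sigma> t) (psi n w U \<sigma> t) = 1"
  using \<open>t \<le> T\<close>
proof (induction t)
  case 0
  have "inner n w (zero_state w) (zero_state w)
      = (\<Sum>x\<in>basisH n w. if x = (0, 0, False, replicate w False) then 1 else 0)"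
    unfolding inner_def zero_state_def by (intro sum.cong refl) auto
  also have "\<dots> = 1" using \<open>0 < n\<close> finite_basisH[of n w] by (simp add: basisH_def)
  finally show ?case using U[of 0] by (simp add: inner_apply_unitary)
next
  case (Suc t)
  then show ?case using U[of "Suc t"] by (simp add: inner_apply_unitary inner_query_op_same)
qed

lemma sum_query_mass_psi:
  assumes "0 < n" and "\<And>i. i \<le> T \<Longrightarrow> unitary_op n w (U i)" and "t \<le> T"
  shows "(\<Sum>(i, j)\<in>{..<n} \<times> {..<n}. query_mass w (psi n w U \<sigma> t) i j) = 1"
proof -
  have "complex_of_real (\<Sum>x\<in>basisH n w. (cmod (psi n w U \<sigma> t x))\<^sup>2) = 1"
    using inner_psi_self[OF assms, where \<sigma> = \<sigma>] by (simp only: inner_self_eq)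
  then have "(\<Sum>x\<in>basisH n w. (cmod (psi n w U \<sigma> t x))\<^sup>2) = 1"
    by (simp only: of_real_eq_1_iff)
  then show ?thesis
    using sum_query_mass[where F = "\<lambda>_ _. 1" and A = "{..<n} \<times> {..<n}" and v = "psi n w U \<sigma> t"]
    by (simp add: basisH_eq split_def)
qed

lemma product_le_weighted_squares:
  fixes a b l :: real
  assumes "0 < l"
  shows "a * b \<le> l * a\<^sup>2 / 2 + b\<^sup>2 / (2 * l)"
proof -
  have "0 \<le> (l * a - b)\<^sup>2" by simp
  then have "2 * l * (a * b) \<le> l * (l * a\<^sup>2) + b\<^sup>2" by (simp add: power2_eq_square algebra_simps)
  then show ?thesis using assms by (simp add: field_simps power2_eq_square)
qed

lemma norm_sum_involution_diff_le:
  fixes u v :: "'a \<Rightarrow> complex" and m :: "'a \<Rightarrow> real"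
  assumes "finite D" and g_D: "\<And>x. x \<in> D \<Longrightarrow> g x \<in> D" and g_g: "\<And>x. x \<in> D \<Longrightarrow> g (g x) = x"
    and m_g: "\<And>x. x \<in> D \<Longrightarrow> m (g x) = m x" and m_pos: "\<And>x. x \<in> D \<Longrightarrow> 0 < m x"
  shows "cmod (\<Sum>x\<in>D. cnj (u x) * (v (g x) - v x))
    \<le> (\<Sum>x\<in>D. m x * (cmod (u x))\<^sup>2 + (cmod (v x))\<^sup>2 / m x)"
proof -
  have "cmod (\<Sum>x\<in>D. cnj (u x) * (v (g x) - v x))
      \<le> (\<Sum>x\<in>D. cmod (u x) * cmod (v (g x)) + cmod (u x) * cmod (v x))"
    by (rule order_trans[OF norm_sum sum_mono])
       (simp add: norm_mult distrib_left[symmetric] mult_left_mono norm_triangle_ineq4)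
  also have "\<dots> \<le> (\<Sum>x\<in>D. m x * (cmod (u x))\<^sup>2
      + (cmod (v (g x)))\<^sup>2 / (2 * m (g x)) + (cmod (v x))\<^sup>2 / (2 * m x))"
  proof (rule sum_mono)
    fix x assume "x \<in> D"
    then show "cmod (u x) * cmod (v (g x)) + cmod (u x) * cmod (v x) \<le> m x * (cmod (u x))\<^sup>2
        + (cmod (v (g x)))\<^sup>2 / (2 * m (g x)) + (cmod (v x))\<^sup>2 / (2 * m x)"
      using product_le_weighted_squares[of "m x" "cmod (u x)" "cmod (v (g x))"]
        product_le_weighted_squares[of "m x" "cmod (u x)" "cmod (v x)"] m_pos[of x] m_g[of x]
      by simp
  qed
  also have "\<dots> = (\<Sum>x\<in>D. m x * (cmod (u x))\<^sup>2)
      + (\<Sum>x\<in>D. (cmod (v (g x)))\<^sup>2 / (2 * m (g x))) + (\<Sum>x\<in>D. (cmod (v x))\<^sup>2 / (2 * m x))"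
    by (simp only: sum.distrib)
  also have "(\<Sum>x\<in>D. (cmod (v (g x)))\<^sup>2 / (2 * m (g x))) = (\<Sum>x\<in>D. (cmod (v x))\<^sup>2 / (2 * m x))"
    by (rule sum.reindex_bij_witness[of _ g g]) (auto simp: g_g g_D)
  also have "(\<Sum>x\<in>D. m x * (cmod (u x))\<^sup>2)
      + (\<Sum>x\<in>D. (cmod (v x))\<^sup>2 / (2 * m x)) + (\<Sum>x\<in>D. (cmod (v x))\<^sup>2 / (2 * m x))
      = (\<Sum>x\<in>D. m x * (cmod (u x))\<^sup>2 + (cmod (v x))\<^sup>2 / m x)"
    by (simp add: sum.distrib sum_distrib_left)
  finally show ?thesis .
qed

definition disagreements :: "nat \<Rightarrow> (nat \<Rightarrow> nat) \<Rightarrow> (nat \<Rightarrow> nat) \<Rightarrow> (nat \<times> nat) set" where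
  "disagreements n \<sigma> \<tau> = {(i, j) \<in> {..<n} \<times> {..<n}. cmp_mat \<sigma> i j \<noteq> cmp_mat \<tau> i j}"

lemma inner_query_op_diff_le:
  fixes \<mu> :: "nat \<Rightarrow> nat \<Rightarrow> real"
  assumes \<mu>_pos: "\<And>i j. (i, j) \<in> disagreements n \<sigma> \<tau> \<Longrightarrow> 0 < \<mu> i j"
  shows "cmod (inner n w (query_op \<sigma> u) (query_op \<tau> v) - inner n w u v)
    \<le> (\<Sum>(i, j)\<in>disagreements n \<sigma> \<tau>. \<mu> i j * query_mass w u i j + query_mass w v i j / \<mu> i j)"
proof -
  define \<Delta> where "\<Delta> = disagreements n \<sigma> \<tau>"
  define D where "D = {(i, j, z). (i, j) \<in> \<Delta> \<and> z \<in> aux_labels w}"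
  \<comment> \<open>\<open>g\<close> flips the answer bit exactly on the states whose query is a disagreement\<close>
  define g where "g x = oracle_flip \<tau> (oracle_flip \<sigma> x)" for x
  define m where "m x = \<mu> (fst x) (fst (snd x))" for x :: basis
  have D_sub: "D \<subseteq> basisH n w" unfolding D_def \<Delta>_def disagreements_def basisH_eq by auto
  have g_D: "g x \<in> D" if "x \<in> D" for x
    using that
    by (cases x) (auto simp: D_def \<Delta>_def disagreements_def g_def oracle_flip_def aux_labels_def)
  have g_id: "g x = x" if "x \<in> basisH n w - D" for x
    using that by (cases x) (auto simp: D_def \<Delta>_def disagreements_def g_def oracle_flip_def
        basisH_def aux_labels_def)
  have "inner n w (query_op \<sigma> u) (query_op \<tau> v) - inner n w u v
      = (\<Sum>x\<in>basisH n w. cnj (u x) * (v (g x) - v x))"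
    unfolding inner_query_op by (simp add: inner_def g_def sum_subtractf[symmetric] algebra_simps)
  also have "\<dots> = (\<Sum>x\<in>D. cnj (u x) * (v (g x) - v x))"
    using D_sub g_id by (intro sum.mono_neutral_right finite_basisH) auto
  also have "cmod \<dots> \<le> (\<Sum>x\<in>D. m x * (cmod (u x))\<^sup>2 + (cmod (v x))\<^sup>2 / m x)"
    using \<mu>_pos
    by (intro norm_sum_involution_diff_le finite_subset[OF D_sub finite_basisH] g_D)
       (auto simp: g_def m_def D_def \<Delta>_def oracle_flip_def)
  also have "\<dots> = (\<Sum>(i, j)\<in>\<Delta>. \<mu> i j * query_mass w u i j + 1 / \<mu> i j * query_mass w v i j)"
    using sum_query_mass[where F = \<mu> and A = \<Delta> and v = u and w = w]
      sum_query_mass[where F = "\<lambda>i j. 1 / \<mu> i j" and A = \<Delta> and v = v and w = w]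
    by (simp add: D_def m_def split_def sum.distrib)
  finally show ?thesis by (simp add: \<Delta>_def)
qed

section \<open>Cyclic shifts of ranks\<close>

definition shift_params :: "nat \<Rightarrow> (nat \<times> nat) set" where
  "shift_params n = {(k, d). 1 \<le> d \<and> k + d < n}"

lemma finite_shift_params: "finite (shift_params n)"
  by (rule finite_subset[of _ "{..<n} \<times> {..<n}"]) (auto simp: shift_params_def)

lemma is_shift_iff:
  "2 \<le> n \<Longrightarrow> is_shift n \<sigma> \<tau> k d \<longleftrightarrow> (k, d) \<in> shift_params n \<and> \<tau> = cyc k d \<circ> \<sigma>"
  unfolding is_shift_def shift_params_def by auto

lemma cyc_permutes: "k + d < n \<Longrightarrow> cyc k d permutes {..<n}"
  by (rule inj_imp_permutes) (auto simp: inj_on_def cyc_def)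

lemma cyc_eq_cyc_iff:
  assumes "1 \<le> d" "1 \<le> d'"
  shows "cyc k d = cyc k' d' \<longleftrightarrow> k = k' \<and> d = d'"
proof
  assume eq: "cyc k d = cyc k' d'"
  have "k = k'"
  proof (rule ccontr)
    assume "k \<noteq> k'"
    then have "cyc k d (min k k') \<noteq> cyc k' d' (min k k')"
      using assms by (auto simp: cyc_def min_def)
    then show False using eq by simp
  qed
  moreover have "cyc k d k = cyc k' d' k" using eq by simp
  ultimately show "k = k' \<and> d = d'" by (simp add: cyc_def)
qed simp

lemma comp_permutes_cancel:
  assumes "\<sigma> permutes S" "f \<circ> \<sigma> = g \<circ> \<sigma>"
  shows "f = g"
proof -
  have "f = (f \<circ> \<sigma>) \<circ> inv \<sigma>" using permutes_inv_o(1)[OF assms(1)] by (simp add: comp_assoc)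
  also have "\<dots> = g" using assms(2) permutes_inv_o(1)[OF assms(1)] by (simp add: comp_assoc)
  finally show ?thesis .
qed

lemma weight_cyc_comp:
  assumes "2 \<le> n" "\<sigma> permutes {..<n}" "(k, d) \<in> shift_params n"
  shows "weight n \<sigma> (cyc k d \<circ> \<sigma>) = 1 / real d"
proof -
  have "(THE d'. \<exists>k'. is_shift n \<sigma> (cyc k d \<circ> \<sigma>) k' d') = d"
  proof (rule the_equality)
    fix d' assume "\<exists>k'. is_shift n \<sigma> (cyc k d \<circ> \<sigma>) k' d'"
    then obtain k' where "(k', d') \<in> shift_params n" "cyc k d = cyc k' d'"
      using assms comp_permutes_cancel is_shift_iff by metis
    then show "d' = d" using assms(3) cyc_eq_cyc_iff by (auto simp: shift_params_def)
  qed (use assms is_shift_iff in blast)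
  then show ?thesis unfolding weight_def using assms is_shift_iff by auto
qed

lemma weight_nonneg: "0 \<le> weight n \<sigma> \<tau>"
  unfolding weight_def by simp

lemma sum_weight_eq:
  assumes n: "2 \<le> n" and \<sigma>: "\<sigma> permutes {..<n}"
  shows "(\<Sum>\<tau>\<in>{\<tau>. \<tau> permutes {..<n}}. weight n \<sigma> \<tau> * G \<tau>)
       = (\<Sum>(k, d)\<in>shift_params n. G (cyc k d \<circ> \<sigma>) / real d)"
proof -
  define shift where "shift = (\<lambda>(k, d). cyc k d \<circ> \<sigma>)"
  have inj: "inj_on shift (shift_params n)"
  proof (rule inj_onI)
    fix x y assume xy: "x \<in> shift_params n" "y \<in> shift_params n" "shift x = shift y"
    obtain k d k' d' where "x = (k, d)" "y = (k', d')" by fastforce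
    moreover from this have "cyc k d = cyc k' d'"
      using xy(3) comp_permutes_cancel[OF \<sigma>] by (simp add: shift_def)
    ultimately show "x = y" using xy(1,2) cyc_eq_cyc_iff by (simp add: shift_params_def)
  qed
  have "(\<Sum>\<tau>\<in>{\<tau>. \<tau> permutes {..<n}}. weight n \<sigma> \<tau> * G \<tau>)
      = (\<Sum>\<tau>\<in>shift ` shift_params n. weight n \<sigma> \<tau> * G \<tau>)"
  proof (rule sum.mono_neutral_right)
    show "shift ` shift_params n \<subseteq> {\<tau>. \<tau> permutes {..<n}}"
      using \<sigma> by (auto simp: shift_def shift_params_def intro!: permutes_compose cyc_permutes)
    show "\<forall>\<tau>\<in>{\<tau>. \<tau> permutes {..<n}} - shift ` shift_params n. weight n \<sigma> \<tau> * G \<tau> = 0"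
      using is_shift_iff[OF n] by (force simp: weight_def shift_def)
  qed (simp add: finite_permutations)
  also have "\<dots> = (\<Sum>x\<in>shift_params n. weight n \<sigma> (shift x) * G (shift x))"
    by (rule sum.reindex[OF inj, unfolded comp_def])
  also have "\<dots> = (\<Sum>(k, d)\<in>shift_params n. G (cyc k d \<circ> \<sigma>) / real d)"
    by (intro sum.cong refl) (auto simp: shift_def weight_cyc_comp[OF n \<sigma>])
  finally show ?thesis .
qed

lemma cyc_order_changes:
  assumes "(r \<le> r') \<noteq> (cyc k d r \<le> cyc k d r')" "1 \<le> d"
  shows "(r = k \<and> k < r' \<and> r' \<le> k + d) \<or> (r' = k \<and> k < r \<and> r \<le> k + d)"
  using assms by (auto simp: cyc_def split: if_splits)

lemma disagreements_shift_subset: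
  assumes "\<sigma> permutes {..<n}" "1 \<le> d"
  shows "disagreements n \<sigma> (cyc k d \<circ> \<sigma>)
    \<subseteq> (\<lambda>e. (inv \<sigma> k, inv \<sigma> (k + e))) ` {1..d} \<union> (\<lambda>e. (inv \<sigma> (k + e), inv \<sigma> k)) ` {1..d}"
proof
  fix p assume "p \<in> disagreements n \<sigma> (cyc k d \<circ> \<sigma>)"
  then obtain i j where p: "p = (i, j)" and "(\<sigma> i \<le> \<sigma> j) \<noteq> (cyc k d (\<sigma> i) \<le> cyc k d (\<sigma> j))"
    by (auto simp: disagreements_def cmp_mat_def)
  then have "(\<sigma> i = k \<and> k < \<sigma> j \<and> \<sigma> j \<le> k + d) \<or> (\<sigma> j = k \<and> k < \<sigma> i \<and> \<sigma> i \<le> k + d)"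
    using cyc_order_changes assms(2) by blast
  moreover have "i = inv \<sigma> (\<sigma> i)" "j = inv \<sigma> (\<sigma> j)"
    using permutes_inverses(2)[OF assms(1)] by simp_all
  ultimately show "p \<in> (\<lambda>e. (inv \<sigma> k, inv \<sigma> (k + e))) ` {1..d}
      \<union> (\<lambda>e. (inv \<sigma> (k + e), inv \<sigma> k)) ` {1..d}"
    unfolding p
    by (elim disjE) (force intro: image_eqI[where x = "\<sigma> j - k"] image_eqI[where x = "\<sigma> i - k"])+
qed

definition rank_pair_mass :: "nat \<Rightarrow> vec \<Rightarrow> (nat \<Rightarrow> nat) \<Rightarrow> nat \<Rightarrow> nat \<Rightarrow> real" where
  "rank_pair_mass w v \<sigma> r r'
    = query_mass w v (inv \<sigma> r) (inv \<sigma> r') + query_mass w v (inv \<sigma> r') (inv \<sigma> r)"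

lemma rank_pair_mass_nonneg: "0 \<le> rank_pair_mass w v \<sigma> r r'"
  unfolding rank_pair_mass_def by (simp add: query_mass_nonneg)

lemma sum_le_sum_two_images:
  fixes h :: "'a \<Rightarrow> real"
  assumes "finite E" "A \<subseteq> f1 ` E \<union> f2 ` E"
    and h1: "\<And>e. e \<in> E \<Longrightarrow> 0 \<le> h (f1 e)" and h2: "\<And>e. e \<in> E \<Longrightarrow> 0 \<le> h (f2 e)"
  shows "sum h A \<le> (\<Sum>e\<in>E. h (f1 e) + h (f2 e))"
proof -
  have "sum h A \<le> sum h (f1 ` E \<union> f2 ` E)"
    using assms by (intro sum_mono2) auto
  also have "\<dots> \<le> sum h (f1 ` E) + sum h (f2 ` E)"
  proof -
    have "0 \<le> sum h (f1 ` E \<inter> f2 ` E)" using h1 by (intro sum_nonneg) auto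
    then show ?thesis using sum.union_inter[of "f1 ` E" "f2 ` E" h] assms(1) by simp
  qed
  also have "\<dots> \<le> (\<Sum>e\<in>E. h (f1 e)) + (\<Sum>e\<in>E. h (f2 e))"
    using assms(1) h1 h2
    by (intro add_mono) (auto intro!: order_trans[OF sum_image_le] simp: comp_def)
  finally show ?thesis by (simp add: sum.distrib)
qed

lemma inv_cyc_comp_apply:
  assumes \<sigma>: "\<sigma> permutes {..<n}" and "(k, d) \<in> shift_params n" and "1 \<le> e" "e \<le> d"
  shows "inv (cyc k d \<circ> \<sigma>) (k + d) = inv \<sigma> k"
    and "inv (cyc k d \<circ> \<sigma>) (k + e - 1) = inv \<sigma> (k + e)"
proof -
  have "(cyc k d \<circ> \<sigma>) (inv \<sigma> k) = k + d" "(cyc k d \<circ> \<sigma>) (inv \<sigma> (k + e)) = k + e - 1"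
    using assms permutes_inverses(1)[OF \<sigma>] by (auto simp: cyc_def)
  then show "inv (cyc k d \<circ> \<sigma>) (k + d) = inv \<sigma> k" "inv (cyc k d \<circ> \<sigma>) (k + e - 1) = inv \<sigma> (k + e)"
    using permutes_inv_eq[OF permutes_compose[OF \<sigma> cyc_permutes]] assms(2)
    by (auto simp: shift_params_def)
qed

lemma inner_query_op_shift_diff_le:
  assumes \<sigma>: "\<sigma> permutes {..<n}" and kd: "(k, d) \<in> shift_params n"
  shows "cmod (inner n w (query_op \<sigma> u) (query_op (cyc k d \<circ> \<sigma>) v) - inner n w u v)
     \<le> (\<Sum>e\<in>{1..d}. shift_lambda e d * rank_pair_mass w u \<sigma> k (k + e)
           + rank_pair_mass w v (cyc k d \<circ> \<sigma>) (k + e - 1) (k + d) / shift_lambda e d)"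
proof -
  define \<tau> where "\<tau> = cyc k d \<circ> \<sigma>"
  \<comment> \<open>on a disagreement the two ranks are \<open>k\<close> and \<open>k + e\<close>, so \<open>\<mu>\<close> is \<open>shift_lambda e d\<close> there\<close>
  define \<mu> where "\<mu> i j = shift_lambda (max (\<sigma> i) (\<sigma> j) - k) d" for i j
  define h where "h = (\<lambda>(i, j). \<mu> i j * query_mass w u i j + query_mass w v i j / \<mu> i j)"
  define f1 f2 where "f1 e = (inv \<sigma> k, inv \<sigma> (k + e))" and "f2 e = (inv \<sigma> (k + e), inv \<sigma> k)" for e
  have sub: "disagreements n \<sigma> \<tau> \<subseteq> f1 ` {1..d} \<union> f2 ` {1..d}"
    using kd unfolding \<tau>_def f1_def f2_def
    by (intro disagreements_shift_subset[OF \<sigma>]) (simp add: shift_params_def)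
  have \<mu>_f: "\<mu> (inv \<sigma> k) (inv \<sigma> (k + e)) = shift_lambda e d"
    "\<mu> (inv \<sigma> (k + e)) (inv \<sigma> k) = shift_lambda e d" for e
    by (simp_all add: \<mu>_def permutes_inverses(1)[OF \<sigma>])
  have h_nonneg: "0 \<le> h (f1 e)" "0 \<le> h (f2 e)" if "e \<in> {1..d}" for e
    using that shift_lambda_pos[of e d] unfolding h_def f1_def f2_def
    by (auto simp: \<mu>_f query_mass_nonneg
        intro!: add_nonneg_nonneg mult_nonneg_nonneg divide_nonneg_pos)
  have "cmod (inner n w (query_op \<sigma> u) (query_op \<tau> v) - inner n w u v)
      \<le> (\<Sum>p\<in>disagreements n \<sigma> \<tau>. h p)"
    unfolding h_def
  proof (rule inner_query_op_diff_le)
    fix i j assume "(i, j) \<in> disagreements n \<sigma> \<tau>"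
    then obtain e where "e \<in> {1..d}" "(i, j) = f1 e \<or> (i, j) = f2 e" using sub by blast
    then show "0 < \<mu> i j" using shift_lambda_pos[of e d] by (auto simp: f1_def f2_def \<mu>_f)
  qed
  also have "\<dots> \<le> (\<Sum>e\<in>{1..d}. h (f1 e) + h (f2 e))"
    using sub h_nonneg by (intro sum_le_sum_two_images) auto
  also have "\<dots> = (\<Sum>e\<in>{1..d}. shift_lambda e d * rank_pair_mass w u \<sigma> k (k + e)
           + rank_pair_mass w v \<tau> (k + e - 1) (k + d) / shift_lambda e d)"
  proof (intro sum.cong refl)
    fix e assume "e \<in> {1..d}"
    then have "1 \<le> e" "e \<le> d" by simp_all
    then show "h (f1 e) + h (f2 e) = shift_lambda e d * rank_pair_mass w u \<sigma> k (k + e)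
        + rank_pair_mass w v \<tau> (k + e - 1) (k + d) / shift_lambda e d"
      unfolding h_def f1_def f2_def \<tau>_def rank_pair_mass_def prod.case \<mu>_f
        inv_cyc_comp_apply[OF \<sigma> kd \<open>1 \<le> e\<close> \<open>e \<le> d\<close>]
      by (simp add: algebra_simps add_divide_distrib)
  qed
  finally show ?thesis unfolding \<tau>_def .
qed

section \<open>Summation over all shifts\<close>

definition shift_triples :: "nat \<Rightarrow> (nat \<times> nat \<times> nat) set" where
  "shift_triples n = {(k, d, e). 1 \<le> e \<and> e \<le> d \<and> k + d < n}"

lemma finite_shift_triples: "finite (shift_triples n)"
  by (rule finite_subset[of _ "{..<n} \<times> {..<n} \<times> {..<n}"]) (auto simp: shift_triples_def)

lemma sum_shift_params_triples:
  "(\<Sum>(k, d)\<in>shift_params n. \<Sum>e\<in>{1..d}. F k d e) = (\<Sum>(k, d, e)\<in>shift_triples n. F k d e)"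
proof -
  have "(\<Sum>(k, d)\<in>shift_params n. \<Sum>e\<in>{1..d}. F k d e)
      = (\<Sum>((k, d), e)\<in>Sigma (shift_params n) (\<lambda>(k, d). {1..d}). F k d e)"
    using sum.Sigma[OF finite_shift_params,
        where B = "\<lambda>(k, d). {1..d}" and g = "\<lambda>(k, d) e. F k d e"]
    by (simp add: split_def)
  also have "\<dots> = (\<Sum>(k, d, e)\<in>shift_triples n. F k d e)"
    by (rule sum.reindex_bij_witness[of _ "\<lambda>(k, d, e). ((k, d), e)" "\<lambda>((k, d), e). (k, d, e)"])
       (auto simp: shift_triples_def shift_params_def)
  finally show ?thesis .
qed

definition rank_pairs :: "nat \<Rightarrow> (nat \<times> nat) set" where
  "rank_pairs n = {(r, r'). r < r' \<and> r' < n}"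

lemma finite_rank_pairs: "finite (rank_pairs n)"
  by (rule finite_subset[of _ "{..<n} \<times> {..<n}"]) (auto simp: rank_pairs_def)

lemma sum_rank_pair_mass_le:
  assumes \<sigma>: "\<sigma> permutes {..<n}"
    and total: "(\<Sum>(i, j)\<in>{..<n} \<times> {..<n}. query_mass w v i j) = 1"
  shows "(\<Sum>(r, r')\<in>rank_pairs n. rank_pair_mass w v \<sigma> r r') \<le> 1"
proof -
  define m where "m = case_prod (query_mass w v) \<circ> map_prod (inv \<sigma>) (inv \<sigma>)"
  define swap :: "nat \<times> nat \<Rightarrow> nat \<times> nat" where "swap = (\<lambda>(r, r'). (r', r))"
  have m_nonneg: "0 \<le> m p" for p by (simp add: m_def query_mass_nonneg split_def)
  have "(\<Sum>(r, r')\<in>rank_pairs n. rank_pair_mass w v \<sigma> r r')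
      = (\<Sum>p\<in>rank_pairs n. m p) + (\<Sum>p\<in>rank_pairs n. m (swap p))"
    by (simp add: sum.distrib[symmetric] split_def m_def swap_def rank_pair_mass_def)
  also have "(\<Sum>p\<in>rank_pairs n. m (swap p)) = (\<Sum>p\<in>swap ` rank_pairs n. m p)"
    by (rule sum.reindex[symmetric, unfolded comp_def]) (auto simp: inj_on_def swap_def)
  also have "(\<Sum>p\<in>rank_pairs n. m p) + (\<Sum>p\<in>swap ` rank_pairs n. m p)
      = (\<Sum>p\<in>rank_pairs n \<union> swap ` rank_pairs n. m p)"
  proof (intro sum.union_disjoint[symmetric] finite_rank_pairs finite_imageI)
    show "rank_pairs n \<inter> swap ` rank_pairs n = {}" by (auto simp: rank_pairs_def swap_def)
  qed
  also have "\<dots> \<le> (\<Sum>p\<in>{..<n} \<times> {..<n}. m p)"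
    by (rule sum_mono2) (auto simp: rank_pairs_def swap_def m_nonneg)
  also have "\<dots> = (\<Sum>(i, j)\<in>{..<n} \<times> {..<n}. query_mass w v i j)"
    unfolding m_def comp_def
    by (rule sum.reindex_bij_betw) (intro bij_betw_map_prod permutes_imp_bij permutes_inv \<sigma>)
  finally show ?thesis using total by simp
qed

lemma sum_le_by_fibres:
  fixes a :: "'t \<Rightarrow> real" and X :: "'p \<Rightarrow> real"
  assumes "finite T" "finite P" "\<Phi> ` T \<subseteq> P"
    and fibre: "\<And>p. p \<in> P \<Longrightarrow> (\<Sum>t\<in>{t \<in> T. \<Phi> t = p}. a t) \<le> C"
    and X_nonneg: "\<And>p. p \<in> P \<Longrightarrow> 0 \<le> X p"
  shows "(\<Sum>t\<in>T. a t * X (\<Phi> t)) \<le> C * (\<Sum>p\<in>P. X p)"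
proof -
  have "(\<Sum>t\<in>T. a t * X (\<Phi> t)) = (\<Sum>p\<in>P. \<Sum>t\<in>{t \<in> T. \<Phi> t = p}. a t * X (\<Phi> t))"
    by (rule sum.group[symmetric]) (use assms in auto)
  also have "\<dots> = (\<Sum>p\<in>P. (\<Sum>t\<in>{t \<in> T. \<Phi> t = p}. a t) * X p)"
    by (intro sum.cong refl) (simp add: sum_distrib_right)
  also have "\<dots> \<le> (\<Sum>p\<in>P. C * X p)"
    by (intro sum_mono mult_right_mono fibre X_nonneg)
  finally show ?thesis by (simp add: sum_distrib_left)
qed

lemma sum_shift_triples_lower_le:
  assumes "\<And>r r'. 0 \<le> X r r'"
  shows "(\<Sum>(k, d, e)\<in>shift_triples n. shift_lambda e d / real d * X k (k + e))
      \<le> pi * (\<Sum>(r, r')\<in>rank_pairs n. X r r')"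
proof -
  have "(\<Sum>(k, d, e)\<in>shift_triples n. shift_lambda e d / real d * X k (k + e))
      = (\<Sum>t\<in>shift_triples n. (\<lambda>(k, d, e). shift_lambda e d / real d) t
            * case_prod X ((\<lambda>(k, d, e). (k, k + e)) t))"
    by (simp add: split_def)
  also have "\<dots> \<le> pi * (\<Sum>(r, r')\<in>rank_pairs n. X r r')"
  proof (rule sum_le_by_fibres[OF finite_shift_triples finite_rank_pairs])
    fix p assume "p \<in> rank_pairs n"
    then obtain r r' where p: "p = (r, r')" "r < r'" "r' < n" by (auto simp: rank_pairs_def)
    have "{t \<in> shift_triples n. (\<lambda>(k, d, e). (k, k + e)) t = p}
        = (\<lambda>d. (r, d, r' - r)) ` {r' - r..<n - r}"
      using p by (auto simp: shift_triples_def image_iff)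
    then show "(\<Sum>t\<in>{t \<in> shift_triples n. (\<lambda>(k, d, e). (k, k + e)) t = p}.
        (\<lambda>(k, d, e). shift_lambda e d / real d) t) \<le> pi"
      using sum_shift_lambda_div_le_pi[of "r' - r" "n - r"] p by (simp add: sum.reindex inj_on_def)
  qed (auto simp: shift_triples_def rank_pairs_def assms)
  finally show ?thesis .
qed

lemma sum_shift_triples_upper_le:
  assumes "\<And>r r'. 0 \<le> X r r'"
  shows "(\<Sum>(k, d, e)\<in>shift_triples n. X (k + e - 1) (k + d) / (real d * shift_lambda e d))
      \<le> pi * (\<Sum>(r, r')\<in>rank_pairs n. X r r')"
proof -
  have "(\<Sum>(k, d, e)\<in>shift_triples n. X (k + e - 1) (k + d) / (real d * shift_lambda e d))
      = (\<Sum>t\<in>shift_triples n. (\<lambda>(k, d, e). 1 / (real d * shift_lambda e d)) t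
            * case_prod X ((\<lambda>(k, d, e). (k + e - 1, k + d)) t))"
    by (simp add: split_def)
  also have "\<dots> \<le> pi * (\<Sum>(r, r')\<in>rank_pairs n. X r r')"
  proof (rule sum_le_by_fibres[OF finite_shift_triples finite_rank_pairs])
    fix p assume "p \<in> rank_pairs n"
    then obtain r r' where p: "p = (r, r')" "r < r'" "r' < n" by (auto simp: rank_pairs_def)
    have "{t \<in> shift_triples n. (\<lambda>(k, d, e). (k + e - 1, k + d)) t = p}
        = (\<lambda>e. (r + 1 - e, r' - r + e - 1, e)) ` {1..r + 1}"
      using p by (force simp: shift_triples_def image_iff)
    then show "(\<Sum>t\<in>{t \<in> shift_triples n. (\<lambda>(k, d, e). (k + e - 1, k + d)) t = p}.
        (\<lambda>(k, d, e). 1 / (real d * shift_lambda e d)) t) \<le> pi"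
      using sum_inverse_mult_shift_lambda_le_pi[of "r' - r" "r + 1"] p
      by (simp add: sum.reindex inj_on_def)
  qed (auto simp: shift_triples_def rank_pairs_def assms)
  finally show ?thesis .
qed

lemma sum_shift_triples_rank_pair_mass_le_pi:
  assumes "\<sigma> permutes {..<n}" and "(\<Sum>(i, j)\<in>{..<n} \<times> {..<n}. query_mass w v i j) = 1"
  shows "(\<Sum>(k, d, e)\<in>shift_triples n.
            shift_lambda e d / real d * rank_pair_mass w v \<sigma> k (k + e)) \<le> pi"
    and "(\<Sum>(k, d, e)\<in>shift_triples n.
            rank_pair_mass w v \<sigma> (k + e - 1) (k + d) / (real d * shift_lambda e d)) \<le> pi"
  using order_trans[OF sum_shift_triples_lower_le mult_left_le[OF sum_rank_pair_mass_le[OF assms]]]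
    order_trans[OF sum_shift_triples_upper_le mult_left_le[OF sum_rank_pair_mass_le[OF assms]]]
  by (simp_all add: rank_pair_mass_nonneg)

lemma abs_diff_weighted_norm_sums_le:
  fixes c :: "'a \<Rightarrow> 'b \<Rightarrow> real" and a b :: "'a \<Rightarrow> 'b \<Rightarrow> 'c::real_normed_vector"
  assumes "\<And>x y. 0 \<le> c x y"
  shows "\<bar>(\<Sum>x\<in>A. \<Sum>y\<in>B. c x y * norm (a x y)) - (\<Sum>x\<in>A. \<Sum>y\<in>B. c x y * norm (b x y))\<bar>
    \<le> (\<Sum>x\<in>A. \<Sum>y\<in>B. c x y * norm (a x y - b x y))"
proof -
  have "\<bar>(\<Sum>x\<in>A. \<Sum>y\<in>B. c x y * norm (a x y)) - (\<Sum>x\<in>A. \<Sum>y\<in>B. c x y * norm (b x y))\<bar>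
      = \<bar>\<Sum>x\<in>A. \<Sum>y\<in>B. c x y * (norm (a x y) - norm (b x y))\<bar>"
    by (simp add: sum_subtractf[symmetric] right_diff_distrib)
  also have "\<dots> \<le> (\<Sum>x\<in>A. \<Sum>y\<in>B. \<bar>c x y * (norm (a x y) - norm (b x y))\<bar>)"
    by (rule order_trans[OF sum_abs sum_mono[OF sum_abs]])
  also have "\<dots> \<le> (\<Sum>x\<in>A. \<Sum>y\<in>B. c x y * norm (a x y - b x y))"
    using assms by (intro sum_mono) (simp add: abs_mult mult_left_mono norm_triangle_ineq3)
  finally show ?thesis .
qed

lemma sum_weight_inner_query_op_diff_le:
  fixes u :: "(nat \<Rightarrow> nat) \<Rightarrow> vec"
  assumes n: "2 \<le> n" and \<sigma>: "\<sigma> permutes {..<n}"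
  shows "(\<Sum>\<tau>\<in>{\<tau>. \<tau> permutes {..<n}}. weight n \<sigma> \<tau>
            * cmod (inner n w (query_op \<sigma> (u \<sigma>)) (query_op \<tau> (u \<tau>)) - inner n w (u \<sigma>) (u \<tau>)))
    \<le> (\<Sum>(k, d, e)\<in>shift_triples n. shift_lambda e d / real d * rank_pair_mass w (u \<sigma>) \<sigma> k (k + e)
          + rank_pair_mass w (u (cyc k d \<circ> \<sigma>)) (cyc k d \<circ> \<sigma>) (k + e - 1) (k + d)
              / (real d * shift_lambda e d))"
proof -
  let ?Y = "\<lambda>k d e. shift_lambda e d * rank_pair_mass w (u \<sigma>) \<sigma> k (k + e)
      + rank_pair_mass w (u (cyc k d \<circ> \<sigma>)) (cyc k d \<circ> \<sigma>) (k + e - 1) (k + d) / shift_lambda e d"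
  have "(\<Sum>\<tau>\<in>{\<tau>. \<tau> permutes {..<n}}. weight n \<sigma> \<tau>
            * cmod (inner n w (query_op \<sigma> (u \<sigma>)) (query_op \<tau> (u \<tau>)) - inner n w (u \<sigma>) (u \<tau>)))
      = (\<Sum>(k, d)\<in>shift_params n.
          cmod (inner n w (query_op \<sigma> (u \<sigma>)) (query_op (cyc k d \<circ> \<sigma>) (u (cyc k d \<circ> \<sigma>)))
            - inner n w (u \<sigma>) (u (cyc k d \<circ> \<sigma>))) / real d)"
    by (rule sum_weight_eq[OF n \<sigma>])
  also have "\<dots> \<le> (\<Sum>(k, d)\<in>shift_params n. (\<Sum>e\<in>{1..d}. ?Y k d e) / real d)"
    using inner_query_op_shift_diff_le[OF \<sigma>]
    by (intro sum_mono) (auto intro: divide_right_mono)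
  also have "\<dots> = (\<Sum>(k, d)\<in>shift_params n. \<Sum>e\<in>{1..d}. ?Y k d e / real d)"
    by (simp add: sum_divide_distrib split_def)
  also have "\<dots> = (\<Sum>(k, d, e)\<in>shift_triples n. ?Y k d e / real d)"
    by (rule sum_shift_params_triples)
  finally show ?thesis by (simp add: add_divide_distrib split_def mult.commute)
qed

lemma sum_permutations_shift_triples_comp:
  "(\<Sum>\<sigma>\<in>{\<sigma>. \<sigma> permutes {..<n}}. \<Sum>(k, d, e)\<in>shift_triples n. F (cyc k d \<circ> \<sigma>) k d e)
     = (\<Sum>\<sigma>\<in>{\<sigma>. \<sigma> permutes {..<n}}. \<Sum>(k, d, e)\<in>shift_triples n. F \<sigma> k d e)"
proof -
  have "(\<Sum>\<sigma>\<in>{\<sigma>. \<sigma> permutes {..<n}}. F (cyc k d \<circ> \<sigma>) k d e) = (\<Sum>\<sigma>\<in>{\<sigma>. \<sigma> permutes {..<n}}. F \<sigma> k d e)"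
    if "(k, d, e) \<in> shift_triples n" for k d e
    using that setum_permutations_compose_left[OF cyc_permutes, of k d n "\<lambda>\<sigma>. F \<sigma> k d e"]
    by (simp add: shift_triples_def)
  then show ?thesis
    by (subst (1 2) sum.swap) (auto intro: sum.cong)
qed

lemma abs_s_val_step_le:
  assumes "2 \<le> n" and "\<And>i. i \<le> T \<Longrightarrow> unitary_op n w (U i)" and "t + 1 \<le> T"
  shows "\<bar>s_val n w U (t + 1) - s_val n w U t\<bar>
    \<le> (\<Sum>\<sigma>\<in>{\<sigma>. \<sigma> permutes {..<n}}. \<Sum>(k, d, e)\<in>shift_triples n.
          shift_lambda e d / real d * rank_pair_mass w (psi n w U \<sigma> t) \<sigma> k (k + e)
          + rank_pair_mass w (psi n w U (cyc k d \<circ> \<sigma>) t) (cyc k d \<circ> \<sigma>) (k + e - 1) (k + d)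
              / (real d * shift_lambda e d))"
proof -
  let ?P = "{\<sigma>. \<sigma> permutes {..<n}}"
  have "inner n w (psi n w U \<sigma> (t + 1)) (psi n w U \<tau> (t + 1))
      = inner n w (query_op \<sigma> (psi n w U \<sigma> t)) (query_op \<tau> (psi n w U \<tau> t))" for \<sigma> \<tau>
    using assms by (simp add: inner_apply_unitary)
  then have "\<bar>s_val n w U (t + 1) - s_val n w U t\<bar> \<le> (\<Sum>\<sigma>\<in>?P. \<Sum>\<tau>\<in>?P. weight n \<sigma> \<tau>
      * cmod (inner n w (query_op \<sigma> (psi n w U \<sigma> t)) (query_op \<tau> (psi n w U \<tau> t))
              - inner n w (psi n w U \<sigma> t) (psi n w U \<tau> t)))"
    unfolding s_val_def by (simp add: abs_diff_weighted_norm_sums_le weight_nonneg)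
  also have "\<dots> \<le> (\<Sum>\<sigma>\<in>?P. \<Sum>(k, d, e)\<in>shift_triples n.
          shift_lambda e d / real d * rank_pair_mass w (psi n w U \<sigma> t) \<sigma> k (k + e)
          + rank_pair_mass w (psi n w U (cyc k d \<circ> \<sigma>) t) (cyc k d \<circ> \<sigma>) (k + e - 1) (k + d)
              / (real d * shift_lambda e d))"
    using assms(1)
    by (intro sum_mono sum_weight_inner_query_op_diff_le[where u = "\<lambda>\<sigma>. psi n w U \<sigma> t"]) auto
  finally show ?thesis .
qed

theorem mainTheorem3:
  fixes n w T :: nat and U :: "nat \<Rightarrow> op"
  assumes "n \<ge> 2"
    and "\<And>i. i \<le> T \<Longrightarrow> unitary_op n w (U i)"
    and "t + 1 \<le> T"
  shows "\<bar>s_val n w U (t + 1) - s_val n w U t\<bar> \<le> 2 * pi * fact n"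
proof -
  let ?P = "{\<sigma>. \<sigma> permutes {..<n}}"
  define Y where "Y \<sigma> = rank_pair_mass w (psi n w U \<sigma> t) \<sigma>" for \<sigma>
  have total: "(\<Sum>(i, j)\<in>{..<n} \<times> {..<n}. query_mass w (psi n w U \<sigma> t) i j) = 1" for \<sigma>
    using assms by (intro sum_query_mass_psi[where T = T]) auto
  have "\<bar>s_val n w U (t + 1) - s_val n w U t\<bar>
      \<le> (\<Sum>\<sigma>\<in>?P. \<Sum>(k, d, e)\<in>shift_triples n. shift_lambda e d / real d * Y \<sigma> k (k + e))
        + (\<Sum>\<sigma>\<in>?P. \<Sum>(k, d, e)\<in>shift_triples n.
              Y (cyc k d \<circ> \<sigma>) (k + e - 1) (k + d) / (real d * shift_lambda e d))"
    using abs_s_val_step_le[OF assms] by (simp add: Y_def sum.distrib split_def)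
  also have "\<dots> \<le> (\<Sum>\<sigma>\<in>?P. pi) + (\<Sum>\<sigma>\<in>?P. pi)"
    unfolding sum_permutations_shift_triples_comp[where
        F = "\<lambda>\<sigma> k d e. Y \<sigma> (k + e - 1) (k + d) / (real d * shift_lambda e d)"]
    using sum_shift_triples_rank_pair_mass_le_pi[OF _ total]
    by (intro add_mono sum_mono) (auto simp: Y_def)
  also have "\<dots> = 2 * pi * fact n" by (simp add: card_permutations)
  finally show ?thesis .
qed

end
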